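(* Let $\mathcal G$ be a connected groupoid and let $F:\mathbf 1\to\mathbf 1$ be a closed complete morphism of $\mathcal H^r(\mathcal G)$. Then for every $g\in\mathcal G$ there exists a morphism $F':H_g\to\mathbf 1$ of $\mathcal H^r(\mathcal G)$ such that $F=F'\circ L_g$.
   Context: Groupoid conventions: a groupoid $\mathcal G$ is a small category in which every morphism is invertible; it is connected if $\mathcal G(i,j)\neq\emptyset$ for all objects $i,j$; $\mathcal G(i,j)$ denotes the morphisms from $i$ to $j$; composition left to right ($g\in\mathcal G(i,j)$, $h\in\mathcal G(j,k)$ give $gh\in\mathcal G(i,k)$); $1_i$ identity, $\bar g$ inverse. Braided monoidal categories: product $\diamond$, unit $\mathbf 1$, braiding $\gamma_{A,B}$, $\bar\gamma_{A,B}:=\gamma_{B,A}^{-1}$; constraints suppressed; $\mathrm{id}_g=\mathrm{id}_{H_g}$, $\gamma_{g,h}=\gamma_{H_g,H_h}$, $\bar\gamma_{g,h}=\bar\gamma_{H_g,H_h}$. $\mathcal H^r(\mathcal G)$ is the braided monoidal category freely generated by objects $H_g$ ($g\in\mathcal G$) and morphisms $\Delta_g:H_g\to H_g\diamond H_g$, $\epsilon_g:H_g\to\mathbf 1$, $m_{g,h}:H_g\diamond H_h\to H_{gh}$, $\eta_i:\mathbf 1\to H_{1_i}$, $S_g,\bar S_g:H_g\to H_{\bar g}$, $l_i:H_{1_i}\to\mathbf 1$, $L_g:\mathbf 1\to H_g$, $v_g,v_g^{-1}:H_g\to H_g$, subject to (composable labels, $g\in\mathcal G(i,j)$): (Hopf)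 $\Delta$ coassociative; $(\epsilon_g\diamond\mathrm{id})\Delta_g=\mathrm{id}_g=(\mathrm{id}\diamond\epsilon_g)\Delta_g$; $m$ associative; $m_{g,1_j}(\mathrm{id}_g\diamond\eta_j)=\mathrm{id}_g=m_{1_i,g}(\eta_i\diamond\mathrm{id}_g)$; $(m_{g,h}\diamond m_{g,h})(\mathrm{id}_g\diamond\gamma_{g,h}\diamond\mathrm{id}_h)(\Delta_g\diamond\Delta_h)=\Delta_{gh}m_{g,h}$; $\epsilon_{gh}m_{g,h}=\epsilon_g\diamond\epsilon_h$; $\Delta_{1_i}\eta_i=\eta_i\diamond\eta_i$; $\epsilon_{1_i}\eta_i=\mathrm{id}_{\mathbf 1}$; $m_{\bar g,g}(S_g\diamond\mathrm{id}_g)\Delta_g=\eta_j\epsilon_g$; $m_{g,\bar g}(\mathrm{id}_g\diamond S_g)\Delta_g=\eta_i\epsilon_g$; $S_{\bar g}\bar S_g=\bar S_{\bar g}S_g=\mathrm{id}_g$. (Integrals) $(\mathrm{id}_{1_i}\diamond l_i)\Delta_{1_i}=\eta_il_i$; $m_{g,h}(L_g\diamond\mathrm{id}_h)=L_{gh}\epsilon_h$; $l_iL_{1_i}=\mathrm{id}_{\mathbf 1}=l_iS_{1_i}L_{1_i}$; $S_gL_g=L_{\bar g}$; $l_iS_{1_i}=l_i$. (Ribbon) $v_gv_g^{-1}=v_g^{-1}v_g=\mathrm{id}_g$; $\epsilon_gv_g=\epsilon_g$; $v_gL_g=L_g$; $S_gv_g=v_{\bar g}S_g$; $m_{g,h}(v_g\diamond\mathrm{id}_h)=v_{gh}m_{g,h}=m_{g,h}(\mathrm{id}_g\diamond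 v_h)$. Copairings $\sigma_{i,i}=(v_{1_i}^{-1}\diamond(v_{1_i}^{-1}S_{1_i}))\Delta_{1_i}v_{1_i}\eta_i$, $\sigma_{i,j}=\eta_i\diamond\eta_j$ ($i\neq j$). For $g\in\mathcal G(p,q)$, $h\in\mathcal G(r,s)$, $k\in\mathrm{Obj}\,\mathcal G$: $\mu_{g,h}=(m_{g,1_q}\diamond m_{1_r,h})(\mathrm{id}_g\diamond\sigma_{q,r}\diamond\mathrm{id}_h)$, $\rho^r_{g,k}=(m_{g,1_q}\diamond\mathrm{id}_{1_k})(\mathrm{id}_g\diamond\sigma_{q,k})$, $\rho^l_{g,k}=(\mathrm{id}_{1_k}\diamond m_{1_p,g})(\sigma_{k,p}\diamond\mathrm{id}_g)$. Required: each $\sigma_{i,j}$ is a Hopf copairing ($(\Delta_{1_i}\diamond\mathrm{id})\sigma_{i,j}=(\mathrm{id}\diamond\mathrm{id}\diamond m_{1_j,1_j})(\mathrm{id}\diamond\sigma_{i,j}\diamond\mathrm{id})\sigma_{i,j}$, $(\mathrm{id}\diamond\Delta_{1_j})\sigma_{i,j}=(m_{1_i,1_i}\diamond\mathrm{id}\diamond\mathrm{id})(\mathrm{id}\diamond\sigma_{i,j}\diamond\mathrm{id})\sigma_{i,j}$, $(\epsilon_{1_i}\diamond\mathrm{id})\sigma_{i,j}=\eta_j$, $(\mathrm{id}\diamond\epsilon_{1_j})\sigma_{i,j}=\eta_i$); $\Delta_gv_g^{-1}=\mu_{g,g}(v_g^{-1}\diamond v_g^{-1})\bar\gamma_{g,g}\Delta_g$;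 for $g\in\mathcal G(p,i)$, $h\in\mathcal G(j,s)$: $(m_{1_j,h}\diamond m_{g,1_i})(S_{1_j}\diamond(\mu_{h,g}\bar\gamma_{g,h}\mu_{g,h})\diamond S_{1_i})(\rho^l_{g,j}\diamond\rho^r_{h,i})=\gamma_{g,h}$. A morphism is closed if its source and target are $\mathbf 1$. A morphism of $\mathcal H^r(\mathcal G)$ is complete if, for an expression of it as a composite of $\diamond$-products of generating morphisms (identities, braidings and their inverses included), the set of labels $g\in\mathcal G$ such that $H_g$ occurs in the source or target of one of these generating morphisms generates, together with the identities of $\mathcal G$, the whole groupoid $\mathcal G$ (every non-identity element is a product of such labels and their inverses); this does not depend on the chosen expression. *)

theory Defs
  imports Main
begin

text \<open>A small groupoid given by its object set, morphism set, source, target,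
  composition (left to right: for g in G(i,j), h in G(j,k), g_cmp g h is in G(i,k)),
  identities and inverses.\<close>

record ('o, 'm) grpd =
  g_ob  :: "'o set"
  g_ar  :: "'m set"
  g_src :: "'m \<Rightarrow> 'o"
  g_tgt :: "'m \<Rightarrow> 'o"
  g_cmp :: "'m \<Rightarrow> 'm \<Rightarrow> 'm"
  g_ide :: "'o \<Rightarrow> 'm"
  g_inv :: "'m \<Rightarrow> 'm"

definition groupoid :: "('o, 'm) grpd \<Rightarrow> bool" where
  "groupoid G \<longleftrightarrow>
     (\<forall>g\<in>g_ar G. g_src G g \<in> g_ob G \<and> g_tgt G g \<in> g_ob G) \<and>
     (\<forall>i\<in>g_ob G. g_ide G i \<in> g_ar G \<and> g_src G (g_ide G i) = i \<and> g_tgt G (g_ide G i) = i) \<and>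
     (\<forall>g\<in>g_ar G. \<forall>h\<in>g_ar G. g_tgt G g = g_src G h \<longrightarrow>
        g_cmp G g h \<in> g_ar G \<and> g_src G (g_cmp G g h) = g_src G g \<and> g_tgt G (g_cmp G g h) = g_tgt G h) \<and>
     (\<forall>g\<in>g_ar G. \<forall>h\<in>g_ar G. \<forall>k\<in>g_ar G. g_tgt G g = g_src G h \<longrightarrow> g_tgt G h = g_src G k \<longrightarrow>
        g_cmp G (g_cmp G g h) k = g_cmp G g (g_cmp G h k)) \<and>
     (\<forall>g\<in>g_ar G. g_cmp G (g_ide G (g_src G g)) g = g \<and> g_cmp G g (g_ide G (g_tgt G g)) = g) \<and>
     (\<forall>g\<in>g_ar G. g_inv G g \<in> g_ar G \<and> g_src G (g_inv G g) = g_tgt G g \<and> g_tgt G (g_inv G g) = g_src G g \<and>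
        g_cmp G g (g_inv G g) = g_ide G (g_src G g) \<and> g_cmp G (g_inv G g) g = g_ide G (g_tgt G g))"

definition connected :: "('o, 'm) grpd \<Rightarrow> bool" where
  "connected G \<longleftrightarrow> (\<forall>i\<in>g_ob G. \<forall>j\<in>g_ob G. \<exists>g\<in>g_ar G. g_src G g = i \<and> g_tgt G g = j)"

inductive_set gen_closure :: "('o, 'm) grpd \<Rightarrow> 'm set \<Rightarrow> 'm set" for G X where
  gc_ide: "i \<in> g_ob G \<Longrightarrow> g_ide G i \<in> gen_closure G X"
| gc_gen: "x \<in> X \<Longrightarrow> x \<in> g_ar G \<Longrightarrow> x \<in> gen_closure G X"
| gc_inv: "x \<in> X \<Longrightarrow> x \<in> g_ar G \<Longrightarrow> g_inv G x \<in> gen_closure G X"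
| gc_cmp: "a \<in> gen_closure G X \<Longrightarrow> b \<in> gen_closure G X \<Longrightarrow> g_tgt G a = g_src G b \<Longrightarrow>
           g_cmp G a b \<in> gen_closure G X"

text \<open>Objects of the (strictified) braided monoidal category are words of labels:
  the list [g1,...,gn] stands for H_g1 \<diamond> ... \<diamond> H_gn, [] for the unit 1.
  Cmp f g is the composite f \<circ> g (g applied first); Tns is \<diamond>.
  Generators: Dlt = Delta, Eps = epsilon, Mul = m, Eta = eta, Ant = S, AntI = S-bar,
  Lint = l, Lco = L, Rib = v, RibI = v^{-1}.\<close>

datatype ('o, 'm) hterm =
    Idt "'m list"
  | Brd "'m list" "'m list"
  | BrdI "'m list" "'m list"
  | Cmp "('o, 'm) hterm" "('o, 'm) hterm"
  | Tns "('o, 'm) hterm" "('o, 'm) hterm"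
  | Dlt 'm
  | Eps 'm
  | Mul 'm 'm
  | Eta 'o
  | Ant 'm
  | AntI 'm
  | Lint 'o
  | Lco 'm
  | Rib 'm
  | RibI 'm

inductive wt :: "('o, 'm) grpd \<Rightarrow> ('o, 'm) hterm \<Rightarrow> 'm list \<Rightarrow> 'm list \<Rightarrow> bool" for G where
  wt_Idt: "set A \<subseteq> g_ar G \<Longrightarrow> wt G (Idt A) A A"
| wt_Brd: "set A \<subseteq> g_ar G \<Longrightarrow> set B \<subseteq> g_ar G \<Longrightarrow> wt G (Brd A B) (A @ B) (B @ A)"
| wt_BrdI: "set A \<subseteq> g_ar G \<Longrightarrow> set B \<subseteq> g_ar G \<Longrightarrow> wt G (BrdI A B) (B @ A) (A @ B)"
| wt_Cmp: "wt G g A B \<Longrightarrow> wt G f B C \<Longrightarrow> wt G (Cmp f g) A C"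
| wt_Tns: "wt G f A B \<Longrightarrow> wt G g C D \<Longrightarrow> wt G (Tns f g) (A @ C) (B @ D)"
| wt_Dlt: "g \<in> g_ar G \<Longrightarrow> wt G (Dlt g) [g] [g, g]"
| wt_Eps: "g \<in> g_ar G \<Longrightarrow> wt G (Eps g) [g] []"
| wt_Mul: "g \<in> g_ar G \<Longrightarrow> h \<in> g_ar G \<Longrightarrow> g_tgt G g = g_src G h \<Longrightarrow>
           wt G (Mul g h) [g, h] [g_cmp G g h]"
| wt_Eta: "i \<in> g_ob G \<Longrightarrow> wt G (Eta i) [] [g_ide G i]"
| wt_Ant: "g \<in> g_ar G \<Longrightarrow> wt G (Ant g) [g] [g_inv G g]"
| wt_AntI: "g \<in> g_ar G \<Longrightarrow> wt G (AntI g) [g] [g_inv G g]"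
| wt_Lint: "i \<in> g_ob G \<Longrightarrow> wt G (Lint i) [g_ide G i] []"
| wt_Lco: "g \<in> g_ar G \<Longrightarrow> wt G (Lco g) [] [g]"
| wt_Rib: "g \<in> g_ar G \<Longrightarrow> wt G (Rib g) [g] [g]"
| wt_RibI: "g \<in> g_ar G \<Longrightarrow> wt G (RibI g) [g] [g]"

definition i1 :: "'m \<Rightarrow> ('o, 'm) hterm" where "i1 g = Idt [g]"

definition sigma :: "('o, 'm) grpd \<Rightarrow> 'o \<Rightarrow> 'o \<Rightarrow> ('o, 'm) hterm" where
  "sigma G i j =
     (if i = j then
        Cmp (Tns (RibI (g_ide G i)) (Cmp (RibI (g_ide G i)) (Ant (g_ide G i))))
            (Cmp (Dlt (g_ide G i)) (Cmp (Rib (g_ide G i)) (Eta i)))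
      else Tns (Eta i) (Eta j))"

definition mu :: "('o, 'm) grpd \<Rightarrow> 'm \<Rightarrow> 'm \<Rightarrow> ('o, 'm) hterm" where
  "mu G g h =
     Cmp (Tns (Mul g (g_ide G (g_tgt G g))) (Mul (g_ide G (g_src G h)) h))
         (Tns (i1 g) (Tns (sigma G (g_tgt G g) (g_src G h)) (i1 h)))"

definition rhor :: "('o, 'm) grpd \<Rightarrow> 'm \<Rightarrow> 'o \<Rightarrow> ('o, 'm) hterm" where
  "rhor G g k =
     Cmp (Tns (Mul g (g_ide G (g_tgt G g))) (i1 (g_ide G k)))
         (Tns (i1 g) (sigma G (g_tgt G g) k))"

definition rhol :: "('o, 'm) grpd \<Rightarrow> 'm \<Rightarrow> 'o \<Rightarrow> ('o, 'm) hterm" where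
  "rhol G g k =
     Cmp (Tns (i1 (g_ide G k)) (Mul (g_ide G (g_src G g)) g))
         (Tns (sigma G k (g_src G g)) (i1 g))"

text \<open>Defining relations (instances are only used when both sides are well typed
  with the same source and target, see heq).\<close>

inductive ax :: "('o, 'm) grpd \<Rightarrow> ('o, 'm) hterm \<Rightarrow> ('o, 'm) hterm \<Rightarrow> bool" for G where
  cat_assoc: "ax G (Cmp (Cmp f g) h) (Cmp f (Cmp g h))"
| cat_idl: "ax G (Cmp (Idt B) f) f"
| cat_idr: "ax G (Cmp f (Idt A)) f"
| mon_assoc: "ax G (Tns (Tns f g) h) (Tns f (Tns g h))"
| mon_unitl: "ax G (Tns (Idt []) f) f"
| mon_unitr: "ax G (Tns f (Idt [])) f"
| mon_id: "ax G (Tns (Idt A) (Idt B)) (Idt (A @ B))"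
| mon_interchange: "ax G (Tns (Cmp f g) (Cmp f' g')) (Cmp (Tns f f') (Tns g g'))"
| br_inv1: "ax G (Cmp (BrdI A B) (Brd A B)) (Idt (A @ B))"
| br_inv2: "ax G (Cmp (Brd A B) (BrdI A B)) (Idt (B @ A))"
| br_hex1: "ax G (Brd (A @ B) C) (Cmp (Tns (Brd A C) (Idt B)) (Tns (Idt A) (Brd B C)))"
| br_hex2: "ax G (Brd A (B @ C)) (Cmp (Tns (Idt B) (Brd A C)) (Tns (Brd A B) (Idt C)))"
| br_nat: "wt G f A A' \<Longrightarrow> wt G g B B' \<Longrightarrow>
           ax G (Cmp (Brd A' B') (Tns f g)) (Cmp (Tns g f) (Brd A B))"
| h_coassoc: "ax G (Cmp (Tns (Dlt g) (i1 g)) (Dlt g)) (Cmp (Tns (i1 g) (Dlt g)) (Dlt g))"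
| h_counitl: "ax G (Cmp (Tns (Eps g) (i1 g)) (Dlt g)) (i1 g)"
| h_counitr: "ax G (Cmp (Tns (i1 g) (Eps g)) (Dlt g)) (i1 g)"
| h_assoc: "ax G (Cmp (Mul (g_cmp G g h) k) (Tns (Mul g h) (i1 k)))
                 (Cmp (Mul g (g_cmp G h k)) (Tns (i1 g) (Mul h k)))"
| h_unitr: "ax G (Cmp (Mul g (g_ide G (g_tgt G g))) (Tns (i1 g) (Eta (g_tgt G g)))) (i1 g)"
| h_unitl: "ax G (Cmp (Mul (g_ide G (g_src G g)) g) (Tns (Eta (g_src G g)) (i1 g))) (i1 g)"
| h_bialg: "ax G (Cmp (Tns (Mul g h) (Mul g h))
                      (Cmp (Tns (i1 g) (Tns (Brd [g] [h]) (i1 h))) (Tns (Dlt g) (Dlt h))))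
                 (Cmp (Dlt (g_cmp G g h)) (Mul g h))"
| h_epsmul: "ax G (Cmp (Eps (g_cmp G g h)) (Mul g h)) (Tns (Eps g) (Eps h))"
| h_deleta: "ax G (Cmp (Dlt (g_ide G i)) (Eta i)) (Tns (Eta i) (Eta i))"
| h_epseta: "ax G (Cmp (Eps (g_ide G i)) (Eta i)) (Idt [])"
| h_antl: "ax G (Cmp (Mul (g_inv G g) g) (Cmp (Tns (Ant g) (i1 g)) (Dlt g)))
                (Cmp (Eta (g_tgt G g)) (Eps g))"
| h_antr: "ax G (Cmp (Mul g (g_inv G g)) (Cmp (Tns (i1 g) (Ant g)) (Dlt g)))
                (Cmp (Eta (g_src G g)) (Eps g))"
| h_antinv1: "ax G (Cmp (Ant (g_inv G g)) (AntI g)) (i1 g)"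
| h_antinv2: "ax G (Cmp (AntI (g_inv G g)) (Ant g)) (i1 g)"
| i_left: "ax G (Cmp (Tns (i1 (g_ide G i)) (Lint i)) (Dlt (g_ide G i))) (Cmp (Eta i) (Lint i))"
| i_right: "ax G (Cmp (Mul g h) (Tns (Lco g) (i1 h))) (Cmp (Lco (g_cmp G g h)) (Eps h))"
| i_norm1: "ax G (Cmp (Lint i) (Lco (g_ide G i))) (Idt [])"
| i_norm2: "ax G (Cmp (Lint i) (Cmp (Ant (g_ide G i)) (Lco (g_ide G i)))) (Idt [])"
| i_antL: "ax G (Cmp (Ant g) (Lco g)) (Lco (g_inv G g))"
| i_antl: "ax G (Cmp (Lint i) (Ant (g_ide G i))) (Lint i)"
| r_inv1: "ax G (Cmp (Rib g) (RibI g)) (i1 g)"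
| r_inv2: "ax G (Cmp (RibI g) (Rib g)) (i1 g)"
| r_eps: "ax G (Cmp (Eps g) (Rib g)) (Eps g)"
| r_L: "ax G (Cmp (Rib g) (Lco g)) (Lco g)"
| r_ant: "ax G (Cmp (Ant g) (Rib g)) (Cmp (Rib (g_inv G g)) (Ant g))"
| r_mull: "ax G (Cmp (Mul g h) (Tns (Rib g) (i1 h))) (Cmp (Rib (g_cmp G g h)) (Mul g h))"
| r_mulr: "ax G (Cmp (Mul g h) (Tns (i1 g) (Rib h))) (Cmp (Rib (g_cmp G g h)) (Mul g h))"
| s_copair1: "ax G (Cmp (Tns (Dlt (g_ide G i)) (i1 (g_ide G j))) (sigma G i j))
                   (Cmp (Tns (Idt [g_ide G i, g_ide G i]) (Mul (g_ide G j) (g_ide G j)))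
                        (Cmp (Tns (i1 (g_ide G i)) (Tns (sigma G i j) (i1 (g_ide G j)))) (sigma G i j)))"
| s_copair2: "ax G (Cmp (Tns (i1 (g_ide G i)) (Dlt (g_ide G j))) (sigma G i j))
                   (Cmp (Tns (Mul (g_ide G i) (g_ide G i)) (Idt [g_ide G j, g_ide G j]))
                        (Cmp (Tns (i1 (g_ide G i)) (Tns (sigma G i j) (i1 (g_ide G j)))) (sigma G i j)))"
| s_copair3: "ax G (Cmp (Tns (Eps (g_ide G i)) (i1 (g_ide G j))) (sigma G i j)) (Eta j)"
| s_copair4: "ax G (Cmp (Tns (i1 (g_ide G i)) (Eps (g_ide G j))) (sigma G i j)) (Eta i)"
| r_twist: "ax G (Cmp (Dlt g) (RibI g))
                 (Cmp (mu G g g) (Cmp (Tns (RibI g) (RibI g)) (Cmp (BrdI [g] [g]) (Dlt g))))"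
| r_braid: "ax G (Cmp (Tns (Mul (g_ide G (g_src G h)) h) (Mul g (g_ide G (g_tgt G g))))
                      (Cmp (Tns (Ant (g_ide G (g_src G h)))
                                (Tns (Cmp (mu G h g) (Cmp (BrdI [h] [g]) (mu G g h)))
                                     (Ant (g_ide G (g_tgt G g)))))
                           (Tns (rhol G g (g_src G h)) (rhor G h (g_tgt G g)))))
                 (Brd [g] [h])"

inductive heq :: "('o, 'm) grpd \<Rightarrow> ('o, 'm) hterm \<Rightarrow> ('o, 'm) hterm \<Rightarrow> bool" for G where
  heq_ax: "ax G s t \<Longrightarrow> wt G s A B \<Longrightarrow> wt G t A B \<Longrightarrow> heq G s t"
| heq_refl: "wt G t A B \<Longrightarrow> heq G t t"
| heq_sym: "heq G s t \<Longrightarrow> heq G t s"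
| heq_trans: "heq G s t \<Longrightarrow> heq G t u \<Longrightarrow> heq G s u"
| heq_Cmp: "heq G f f' \<Longrightarrow> heq G g g' \<Longrightarrow> wt G (Cmp f g) A B \<Longrightarrow> heq G (Cmp f g) (Cmp f' g')"
| heq_Tns: "heq G f f' \<Longrightarrow> heq G g g' \<Longrightarrow> heq G (Tns f g) (Tns f' g')"

fun labels :: "('o, 'm) grpd \<Rightarrow> ('o, 'm) hterm \<Rightarrow> 'm set" where
  "labels G (Idt A) = set A"
| "labels G (Brd A B) = set A \<union> set B"
| "labels G (BrdI A B) = set A \<union> set B"
| "labels G (Cmp f g) = labels G f \<union> labels G g"
| "labels G (Tns f g) = labels G f \<union> labels G g"
| "labels G (Dlt g) = {g}"
| "labels G (Eps g) = {g}"
| "labels G (Mul g h) = {g, h, g_cmp G g h}"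
| "labels G (Eta i) = {g_ide G i}"
| "labels G (Ant g) = {g, g_inv G g}"
| "labels G (AntI g) = {g, g_inv G g}"
| "labels G (Lint i) = {g_ide G i}"
| "labels G (Lco g) = {g}"
| "labels G (Rib g) = {g}"
| "labels G (RibI g) = {g}"

definition complete :: "('o, 'm) grpd \<Rightarrow> ('o, 'm) hterm \<Rightarrow> bool" where
  "complete G t \<longleftrightarrow> g_ar G \<subseteq> gen_closure G (labels G t)"

end

(*
  Every morphism t can be rewritten as (eps_E (x) id) o t', where eps_E is a tensor
  product of counits containing eps_x for every label x of t: at an object H_x met by t insert
  id_x = (eps_x (x) id_x) o Delta_x and slide the counit to the end, braiding it past the other
  strands.  For the closed F this gives F = eps_E o Q.  Say that eps_E factors through L_k if
  eps_E = theta o (L_k (x) id_E) for some theta.  It does for k = 1_i since l_i L_(1_i) = id, and if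
  it does for k and x occurs in E, then also for k x and k x^-1: copy x to the front with Delta_x
  and absorb it into L by the right integral property m (L_K (x) id_h) = L_(K h) eps_h,
  precomposed with S_x (eps S = eps) or with id_x.  By completeness this reaches g, and then
  F = theta o (L_g (x) id_E) o Q = theta o (id_g (x) Q) o L_g.
*)

theory Submission
  imports Defs
begin

section \<open>Typing of expressions\<close>

(* A partial function rather than the relation wt: simp computes the type of a composite
   expression, which discharges the side conditions htype G t \<noteq> None of the rules below. *)
fun htype :: "('o, 'm) grpd \<Rightarrow> ('o, 'm) hterm \<Rightarrow> ('m list \<times> 'm list) option" where
  "htype G (Idt A) = (if set A \<subseteq> g_ar G then Some (A, A) else None)"
| "htype G (Brd A B) = (if set A \<subseteq> g_ar G \<and> set B \<subseteq> g_ar G then Some (A @ B, B @ A) else None)"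
| "htype G (BrdI A B) = (if set A \<subseteq> g_ar G \<and> set B \<subseteq> g_ar G then Some (B @ A, A @ B) else None)"
| "htype G (Cmp f g) = (case htype G g of None \<Rightarrow> None | Some (A, B) \<Rightarrow>
     (case htype G f of None \<Rightarrow> None | Some (B', C) \<Rightarrow> if B' = B then Some (A, C) else None))"
| "htype G (Tns f g) = (case htype G f of None \<Rightarrow> None | Some (A, B) \<Rightarrow>
     (case htype G g of None \<Rightarrow> None | Some (C, D) \<Rightarrow> Some (A @ C, B @ D)))"
| "htype G (Dlt g) = (if g \<in> g_ar G then Some ([g], [g, g]) else None)"
| "htype G (Eps g) = (if g \<in> g_ar G then Some ([g], []) else None)"
| "htype G (Mul g h) = (if g \<in> g_ar G \<and> h \<in> g_ar G \<and> g_tgt G g = g_src G h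
     then Some ([g, h], [g_cmp G g h]) else None)"
| "htype G (Eta i) = (if i \<in> g_ob G then Some ([], [g_ide G i]) else None)"
| "htype G (Ant g) = (if g \<in> g_ar G then Some ([g], [g_inv G g]) else None)"
| "htype G (AntI g) = (if g \<in> g_ar G then Some ([g], [g_inv G g]) else None)"
| "htype G (Lint i) = (if i \<in> g_ob G then Some ([g_ide G i], []) else None)"
| "htype G (Lco g) = (if g \<in> g_ar G then Some ([], [g]) else None)"
| "htype G (Rib g) = (if g \<in> g_ar G then Some ([g], [g]) else None)"
| "htype G (RibI g) = (if g \<in> g_ar G then Some ([g], [g]) else None)"

lemma htype_Cmp_eq_Some:
  "htype G (Cmp f g) = Some (A, C) \<longleftrightarrow> (\<exists>B. htype G g = Some (A, B) \<and> htype G f = Some (B, C))"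
  by (auto split: option.splits if_splits)

lemma htype_Tns_eq_Some:
  "htype G (Tns f g) = Some (A, B) \<longleftrightarrow>
     (\<exists>A1 A2 B1 B2. htype G f = Some (A1, B1) \<and> htype G g = Some (A2, B2) \<and> A = A1 @ A2 \<and> B = B1 @ B2)"
  by (auto split: option.splits)

lemma wt_iff_htype: "wt G t A B \<longleftrightarrow> htype G t = Some (A, B)"
proof
  show "wt G t A B \<Longrightarrow> htype G t = Some (A, B)"
    by (induction rule: wt.induct) auto
  show "htype G t = Some (A, B) \<Longrightarrow> wt G t A B"
  proof (induction t arbitrary: A B)
    case (Cmp f g)
    then show ?case by (metis htype_Cmp_eq_Some wt_Cmp)
  next
    case (Tns f g)
    then obtain A1 A2 B1 B2 where "htype G f = Some (A1, B1)" "htype G g = Some (A2, B2)"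
      "A = A1 @ A2" "B = B1 @ B2"
      by (auto split: option.splits)
    with Tns.IH show ?case by (metis wt_Tns)
  qed (auto split: if_splits intro: wt.intros)
qed

lemma heq_htype: "heq G s t \<Longrightarrow> htype G s = htype G t \<and> htype G s \<noteq> None"
proof (induction rule: heq.induct)
  case (heq_Cmp f f' g g' A B)
  from heq_Cmp.hyps(3) obtain C where "htype G g = Some (A, C)" "htype G f = Some (C, B)"
    unfolding wt_iff_htype htype_Cmp_eq_Some by blast
  with heq_Cmp.IH have "htype G g' = Some (A, C)" "htype G f' = Some (C, B)" by auto
  with \<open>htype G g = Some (A, C)\<close> \<open>htype G f = Some (C, B)\<close> show ?case by simp
next
  case (heq_Tns f f' g g')
  then show ?case by (cases "htype G f'"; cases "htype G g'") auto
qed (simp_all add: wt_iff_htype, metis+)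

section \<open>Equational reasoning in H^r(G)\<close>

locale hterm_calculus =
  fixes G :: "('o, 'm) grpd"
begin

abbreviation heq_G (infix "\<approx>" 50) where "s \<approx> t \<equiv> heq G s t"

lemmas [trans] = heq_trans

lemma heq_axiomI: "ax G s t \<Longrightarrow> htype G s \<noteq> None \<Longrightarrow> htype G t = htype G s \<Longrightarrow> s \<approx> t"
  by (metis heq_ax not_None_eq surj_pair wt_iff_htype)

lemma heq_reflI: "htype G t \<noteq> None \<Longrightarrow> t \<approx> t"
  by (metis heq_refl not_None_eq surj_pair wt_iff_htype)

lemma heq_CmpI: "f \<approx> f' \<Longrightarrow> g \<approx> g' \<Longrightarrow> htype G (Cmp f g) \<noteq> None \<Longrightarrow> Cmp f g \<approx> Cmp f' g'"
  by (metis heq_Cmp not_None_eq surj_pair wt_iff_htype)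

lemma heq_CmpL: "f \<approx> f' \<Longrightarrow> htype G (Cmp f g) \<noteq> None \<Longrightarrow> Cmp f g \<approx> Cmp f' g"
  by (rule heq_CmpI) (auto intro: heq_reflI split: option.splits)

lemma heq_CmpR: "g \<approx> g' \<Longrightarrow> htype G (Cmp f g) \<noteq> None \<Longrightarrow> Cmp f g \<approx> Cmp f g'"
  by (rule heq_CmpI) (auto intro: heq_reflI split: option.splits if_splits)

lemma heq_TnsL: "f \<approx> f' \<Longrightarrow> htype G g \<noteq> None \<Longrightarrow> Tns f g \<approx> Tns f' g"
  by (rule heq_Tns) (auto intro: heq_reflI)

lemma heq_TnsR: "g \<approx> g' \<Longrightarrow> htype G f \<noteq> None \<Longrightarrow> Tns f g \<approx> Tns f g'"
  by (rule heq_Tns) (auto intro: heq_reflI)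

lemma Cmp_Idt_left: "htype G (Cmp (Idt B) f) \<noteq> None \<Longrightarrow> Cmp (Idt B) f \<approx> f"
  by (rule heq_axiomI[OF cat_idl]) (auto split: option.splits if_splits)

lemma Cmp_Idt_right: "htype G (Cmp f (Idt A)) \<noteq> None \<Longrightarrow> Cmp f (Idt A) \<approx> f"
  by (rule heq_axiomI[OF cat_idr]) (auto split: option.splits if_splits)

lemma Cmp_assoc: "htype G (Cmp (Cmp f g) h) \<noteq> None \<Longrightarrow> Cmp (Cmp f g) h \<approx> Cmp f (Cmp g h)"
  by (rule heq_axiomI[OF cat_assoc]) (auto split: option.splits if_splits)

lemma Tns_assoc: "htype G (Tns (Tns f g) h) \<noteq> None \<Longrightarrow> Tns (Tns f g) h \<approx> Tns f (Tns g h)"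
  by (rule heq_axiomI[OF mon_assoc]) (auto split: option.splits)

lemma Tns_unit_left: "htype G f \<noteq> None \<Longrightarrow> Tns (Idt []) f \<approx> f"
  by (rule heq_axiomI[OF mon_unitl]) (auto split: option.splits)

lemma Tns_unit_right: "htype G f \<noteq> None \<Longrightarrow> Tns f (Idt []) \<approx> f"
  by (rule heq_axiomI[OF mon_unitr]) (auto split: option.splits)

lemma Tns_Idt: "set A \<subseteq> g_ar G \<Longrightarrow> set B \<subseteq> g_ar G \<Longrightarrow> Tns (Idt A) (Idt B) \<approx> Idt (A @ B)"
  by (rule heq_axiomI[OF mon_id]) auto

lemma Tns_Cmp: "htype G (Tns (Cmp f g) (Cmp f' g')) \<noteq> None \<Longrightarrow>
    Tns (Cmp f g) (Cmp f' g') \<approx> Cmp (Tns f f') (Tns g g')"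
  by (rule heq_axiomI[OF mon_interchange]) (auto split: option.splits if_splits)

lemma Cmp_Tns: "htype G (Tns (Cmp f g) (Cmp f' g')) \<noteq> None \<Longrightarrow>
    Cmp (Tns f f') (Tns g g') \<approx> Tns (Cmp f g) (Cmp f' g')"
  by (rule heq_sym, rule Tns_Cmp)

lemma Tns_Idt_append:
  assumes h: "htype G h \<noteq> None" and A: "set A \<subseteq> g_ar G" and B: "set B \<subseteq> g_ar G"
  shows "Tns h (Idt (A @ B)) \<approx> Tns (Tns h (Idt A)) (Idt B)"
proof -
  have "Tns h (Idt (A @ B)) \<approx> Tns h (Tns (Idt A) (Idt B))"
    using h A B by (intro heq_TnsR heq_sym[OF Tns_Idt]) auto
  also have "\<dots> \<approx> Tns (Tns h (Idt A)) (Idt B)"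
    using h A B by (intro heq_sym[OF Tns_assoc]) auto
  finally show ?thesis .
qed

end

locale hterm_groupoid = hterm_calculus G for G :: "('o, 'm) grpd" +
  assumes groupoid: "groupoid G"
begin

lemma src_ar[simp]: "g \<in> g_ar G \<Longrightarrow> g_src G g \<in> g_ob G"
  and tgt_ar[simp]: "g \<in> g_ar G \<Longrightarrow> g_tgt G g \<in> g_ob G"
  and ide_ar[simp]: "i \<in> g_ob G \<Longrightarrow> g_ide G i \<in> g_ar G"
  and src_ide[simp]: "i \<in> g_ob G \<Longrightarrow> g_src G (g_ide G i) = i"
  and tgt_ide[simp]: "i \<in> g_ob G \<Longrightarrow> g_tgt G (g_ide G i) = i"
  and cmp_ar[simp]: "g \<in> g_ar G \<Longrightarrow> h \<in> g_ar G \<Longrightarrow> g_tgt G g = g_src G h \<Longrightarrow> g_cmp G g h \<in> g_ar G"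
  and src_cmp[simp]: "g \<in> g_ar G \<Longrightarrow> h \<in> g_ar G \<Longrightarrow> g_tgt G g = g_src G h \<Longrightarrow>
    g_src G (g_cmp G g h) = g_src G g"
  and tgt_cmp[simp]: "g \<in> g_ar G \<Longrightarrow> h \<in> g_ar G \<Longrightarrow> g_tgt G g = g_src G h \<Longrightarrow>
    g_tgt G (g_cmp G g h) = g_tgt G h"
  and cmp_ide_left[simp]: "g \<in> g_ar G \<Longrightarrow> g_cmp G (g_ide G (g_src G g)) g = g"
  and cmp_ide_right[simp]: "g \<in> g_ar G \<Longrightarrow> g_cmp G g (g_ide G (g_tgt G g)) = g"
  and inv_ar[simp]: "g \<in> g_ar G \<Longrightarrow> g_inv G g \<in> g_ar G"
  and src_inv[simp]: "g \<in> g_ar G \<Longrightarrow> g_src G (g_inv G g) = g_tgt G g"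
  and tgt_inv[simp]: "g \<in> g_ar G \<Longrightarrow> g_tgt G (g_inv G g) = g_src G g"
  and cmp_inv_right[simp]: "g \<in> g_ar G \<Longrightarrow> g_cmp G g (g_inv G g) = g_ide G (g_src G g)"
  and cmp_inv_left[simp]: "g \<in> g_ar G \<Longrightarrow> g_cmp G (g_inv G g) g = g_ide G (g_tgt G g)"
  using groupoid unfolding groupoid_def by blast+

lemma cmp_assoc:
  "g \<in> g_ar G \<Longrightarrow> h \<in> g_ar G \<Longrightarrow> k \<in> g_ar G \<Longrightarrow> g_tgt G g = g_src G h \<Longrightarrow> g_tgt G h = g_src G k \<Longrightarrow>
    g_cmp G (g_cmp G g h) k = g_cmp G g (g_cmp G h k)"
  using groupoid unfolding groupoid_def by blast

lemma inv_inv[simp]: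
  assumes g: "g \<in> g_ar G"
  shows "g_inv G (g_inv G g) = g"
proof -
  let ?h = "g_inv G g"
  have "g_inv G ?h = g_cmp G (g_cmp G g ?h) (g_inv G ?h)"
    using g cmp_ide_left[of "g_inv G ?h"] by simp
  also have "\<dots> = g_cmp G g (g_cmp G ?h (g_inv G ?h))"
    using g by (intro cmp_assoc) auto
  also have "\<dots> = g"
    using g by simp
  finally show ?thesis .
qed

lemma htype_arrows:
  "htype G t = Some (A, B) \<Longrightarrow> set A \<subseteq> g_ar G \<and> set B \<subseteq> g_ar G"
proof (induction t arbitrary: A B)
  case (Cmp f g)
  then obtain C where "htype G g = Some (A, C)" "htype G f = Some (C, B)"
    unfolding htype_Cmp_eq_Some by blast
  with Cmp.IH show ?case by blast
next
  case (Tns f g)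
  then obtain A1 A2 B1 B2 where "htype G f = Some (A1, B1)" "htype G g = Some (A2, B2)"
    "A = A1 @ A2" "B = B1 @ B2"
    unfolding htype_Tns_eq_Some by blast
  with Tns.IH show ?case by auto
qed (auto split: if_splits)

lemma Tns_split_snd_first:
  assumes f: "htype G f = Some (A, B)" and g: "htype G g = Some (C, D)"
  shows "Tns f g \<approx> Cmp (Tns f (Idt D)) (Tns (Idt A) g)"
proof -
  have "set A \<subseteq> g_ar G" "set D \<subseteq> g_ar G"
    using f g htype_arrows by blast+
  with f g have "Tns f g \<approx> Tns (Cmp f (Idt A)) (Cmp (Idt D) g)"
    by (intro heq_Tns heq_sym[OF Cmp_Idt_right] heq_sym[OF Cmp_Idt_left]) auto
  also have "\<dots> \<approx> Cmp (Tns f (Idt D)) (Tns (Idt A) g)"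
    using \<open>set A \<subseteq> g_ar G\<close> \<open>set D \<subseteq> g_ar G\<close> f g by (intro Tns_Cmp) auto
  finally show ?thesis .
qed

lemma Tns_split_fst_first:
  assumes f: "htype G f = Some (A, B)" and g: "htype G g = Some (C, D)"
  shows "Tns f g \<approx> Cmp (Tns (Idt B) g) (Tns f (Idt C))"
proof -
  have "set B \<subseteq> g_ar G" "set C \<subseteq> g_ar G"
    using f g htype_arrows by blast+
  with f g have "Tns f g \<approx> Tns (Cmp (Idt B) f) (Cmp g (Idt C))"
    by (intro heq_Tns heq_sym[OF Cmp_Idt_right] heq_sym[OF Cmp_Idt_left]) auto
  also have "\<dots> \<approx> Cmp (Tns (Idt B) g) (Tns f (Idt C))"
    using \<open>set B \<subseteq> g_ar G\<close> \<open>set C \<subseteq> g_ar G\<close> f g by (intro Tns_Cmp) auto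
  finally show ?thesis .
qed

lemma Cmp_Tns_Idt:
  assumes "htype G (Cmp a b) \<noteq> None" and "set D \<subseteq> g_ar G"
  shows "Cmp (Tns a (Idt D)) (Tns b (Idt D)) \<approx> Tns (Cmp a b) (Idt D)"
proof -
  have "Cmp (Tns a (Idt D)) (Tns b (Idt D)) \<approx> Tns (Cmp a b) (Cmp (Idt D) (Idt D))"
    using assms by (intro Cmp_Tns) (auto split: option.splits)
  also have "\<dots> \<approx> Tns (Cmp a b) (Idt D)"
    using assms by (intro heq_TnsR Cmp_Idt_left) auto
  finally show ?thesis .
qed

lemma Cmp_Idt_Tns:
  assumes "htype G (Cmp a b) \<noteq> None" and "set D \<subseteq> g_ar G"
  shows "Cmp (Tns (Idt D) a) (Tns (Idt D) b) \<approx> Tns (Idt D) (Cmp a b)"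
proof -
  have "Cmp (Tns (Idt D) a) (Tns (Idt D) b) \<approx> Tns (Cmp (Idt D) (Idt D)) (Cmp a b)"
    using assms by (intro Cmp_Tns) (auto split: option.splits)
  also have "\<dots> \<approx> Tns (Idt D) (Cmp a b)"
    using assms by (intro heq_TnsL Cmp_Idt_left) auto
  finally show ?thesis .
qed

lemma slide_point:
  assumes x: "htype G x = Some ([], X)" and f: "htype G f = Some (A, B)"
  shows "Cmp (Tns (Idt X) f) (Tns x (Idt A)) \<approx> Cmp (Tns x (Idt B)) f"
proof -
  have "Cmp (Tns (Idt X) f) (Tns x (Idt A)) \<approx> Tns x f"
    using Tns_split_fst_first[OF x f] by (rule heq_sym)
  also have "\<dots> \<approx> Cmp (Tns x (Idt B)) (Tns (Idt []) f)"
    using Tns_split_snd_first[OF x f] .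
  also have "\<dots> \<approx> Cmp (Tns x (Idt B)) f"
    using x f htype_arrows[OF f] by (intro heq_CmpR Tns_unit_left) auto
  finally show ?thesis .
qed

lemma slide_copoint:
  assumes h: "htype G h = Some (E, [])" and f: "htype G f = Some (A, B)"
  shows "Cmp f (Tns h (Idt A)) \<approx> Cmp (Tns h (Idt B)) (Tns (Idt E) f)"
proof -
  have "Cmp f (Tns h (Idt A)) \<approx> Cmp (Tns (Idt []) f) (Tns h (Idt A))"
    using h f htype_arrows[OF f] by (intro heq_CmpL heq_sym[OF Tns_unit_left]) auto
  also have "\<dots> \<approx> Tns h f"
    using Tns_split_fst_first[OF h f] by (rule heq_sym)
  also have "\<dots> \<approx> Cmp (Tns h (Idt B)) (Tns (Idt E) f)"
    using Tns_split_snd_first[OF h f] .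
  finally show ?thesis .
qed

lemma Brd_Nil_right:
  assumes A: "set A \<subseteq> g_ar G"
  shows "Brd A [] \<approx> Idt A"
proof -
  let ?b = "Brd A []"
  have inv: "Cmp (BrdI A []) ?b \<approx> Idt A"
    using heq_axiomI[OF br_inv1[of G A "[]"]] A by simp
  have "?b \<approx> Cmp (Tns (Idt []) ?b) (Tns ?b (Idt []))"
    using heq_axiomI[OF br_hex2[of G A "[]" "[]"]] A by simp
  also have "\<dots> \<approx> Cmp ?b ?b"
    using A by (intro heq_CmpI Tns_unit_left Tns_unit_right) auto
  finally have idempotent: "?b \<approx> Cmp ?b ?b" .
  have "Idt A \<approx> Cmp (BrdI A []) ?b"
    using inv by (rule heq_sym)
  also have "\<dots> \<approx> Cmp (BrdI A []) (Cmp ?b ?b)"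
    using idempotent A by (intro heq_CmpR) auto
  also have "\<dots> \<approx> Cmp (Cmp (BrdI A []) ?b) ?b"
    using A by (intro heq_sym[OF Cmp_assoc]) auto
  also have "\<dots> \<approx> Cmp (Idt A) ?b"
    using inv A by (intro heq_CmpL) auto
  also have "\<dots> \<approx> ?b"
    using A by (intro Cmp_Idt_left) auto
  finally show ?thesis by (rule heq_sym)
qed

lemma Brd_copoint:
  assumes h: "htype G h = Some (E, [])" and B: "set B \<subseteq> g_ar G"
  shows "Cmp (Tns h (Idt B)) (Brd B E) \<approx> Tns (Idt B) h"
proof -
  have E: "set E \<subseteq> g_ar G"
    using h htype_arrows by blast
  have "Cmp (Brd B []) (Tns (Idt B) h) \<approx> Cmp (Tns h (Idt B)) (Brd B E)"
    using heq_axiomI[OF br_nat[of G "Idt B" B B h E "[]"]] h B E by (simp add: wt_iff_htype)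
  then have "Cmp (Tns h (Idt B)) (Brd B E) \<approx> Cmp (Brd B []) (Tns (Idt B) h)"
    by (rule heq_sym)
  also have "\<dots> \<approx> Cmp (Idt B) (Tns (Idt B) h)"
    using h B by (intro heq_CmpL Brd_Nil_right) auto
  also have "\<dots> \<approx> Tns (Idt B) h"
    using h B by (intro Cmp_Idt_left) auto
  finally show ?thesis .
qed

end

section \<open>Splitting off counits\<close>

fun Eps_list :: "'m list \<Rightarrow> ('o, 'm) hterm" where
  "Eps_list [] = Idt []"
| "Eps_list (e # E) = Tns (Eps e) (Eps_list E)"

context hterm_groupoid
begin

lemma htype_Eps_list[simp]:
  "htype G (Eps_list E) = (if set E \<subseteq> g_ar G then Some (E, []) else None)"
  by (induction E) auto

lemma Eps_list_append:
  assumes "set E1 \<subseteq> g_ar G" and "set E2 \<subseteq> g_ar G"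
  shows "Eps_list (E1 @ E2) \<approx> Tns (Eps_list E1) (Eps_list E2)"
  using assms(1)
proof (induction E1)
  case Nil
  show ?case
    using assms(2) by (auto intro: heq_sym[OF Tns_unit_left])
next
  case (Cons e E1)
  then have "Eps_list ((e # E1) @ E2) \<approx> Tns (Eps e) (Tns (Eps_list E1) (Eps_list E2))"
    by (auto intro: heq_TnsR)
  also have "\<dots> \<approx> Tns (Eps_list (e # E1)) (Eps_list E2)"
    using Cons.prems assms(2) by (auto intro: heq_sym[OF Tns_assoc])
  finally show ?case .
qed

lemma Cmp_Eps_list:
  assumes E1: "set E1 \<subseteq> g_ar G" and E2: "set E2 \<subseteq> g_ar G" and C: "set C \<subseteq> g_ar G"
  shows "Cmp (Tns (Eps_list E1) (Idt C)) (Tns (Eps_list E2) (Idt (E1 @ C))) \<approx>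
    Tns (Eps_list (E2 @ E1)) (Idt C)"
proof -
  have "Cmp (Eps_list E1) (Tns (Eps_list E2) (Idt E1)) \<approx>
      Cmp (Tns (Idt []) (Eps_list E1)) (Tns (Eps_list E2) (Idt E1))"
    using assms by (intro heq_CmpL heq_sym[OF Tns_unit_left]) auto
  also have "\<dots> \<approx> Tns (Eps_list E2) (Eps_list E1)"
    using assms by (intro heq_sym[OF Tns_split_fst_first]) auto
  also have "\<dots> \<approx> Eps_list (E2 @ E1)"
    using assms by (intro heq_sym[OF Eps_list_append])
  finally have counits: "Cmp (Eps_list E1) (Tns (Eps_list E2) (Idt E1)) \<approx> Eps_list (E2 @ E1)" .
  have "Cmp (Tns (Eps_list E1) (Idt C)) (Tns (Eps_list E2) (Idt (E1 @ C))) \<approx>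
      Cmp (Tns (Eps_list E1) (Idt C)) (Tns (Tns (Eps_list E2) (Idt E1)) (Idt C))"
    using assms by (intro heq_CmpR Tns_Idt_append) auto
  also have "\<dots> \<approx> Tns (Cmp (Eps_list E1) (Tns (Eps_list E2) (Idt E1))) (Idt C)"
    using assms by (intro Cmp_Tns_Idt) auto
  also have "\<dots> \<approx> Tns (Eps_list (E2 @ E1)) (Idt C)"
    using counits C by (intro heq_TnsL) auto
  finally show ?thesis .
qed

definition splits_counits :: "('o, 'm) hterm \<Rightarrow> 'm set \<Rightarrow> bool" where
  "splits_counits t S \<longleftrightarrow> (\<exists>E B t'. t \<approx> Cmp (Tns (Eps_list E) (Idt B)) t' \<and> S \<subseteq> set E)"

lemma splits_counitsI:
  "t \<approx> Cmp (Tns (Eps_list E) (Idt B)) t' \<Longrightarrow> S \<subseteq> set E \<Longrightarrow> splits_counits t S"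
  unfolding splits_counits_def by blast

lemma splits_counitsE:
  assumes "splits_counits t S" and "htype G t = Some (A, B)"
  obtains E t' where "htype G t' = Some (A, E @ B)" "set E \<subseteq> g_ar G"
    "t \<approx> Cmp (Tns (Eps_list E) (Idt B)) t'" "S \<subseteq> set E"
proof -
  from assms(1) obtain E B' t' where t': "t \<approx> Cmp (Tns (Eps_list E) (Idt B')) t'" "S \<subseteq> set E"
    unfolding splits_counits_def by blast
  then have "htype G (Cmp (Tns (Eps_list E) (Idt B')) t') = Some (A, B)"
    using heq_htype assms(2) by metis
  then obtain C where "htype G t' = Some (A, C)" "htype G (Tns (Eps_list E) (Idt B')) = Some (C, B)"
    unfolding htype_Cmp_eq_Some by blast
  moreover from this have "set E \<subseteq> g_ar G" "C = E @ B'" "B = B'"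
    by (auto split: if_splits)
  ultimately show ?thesis
    using that t' by blast
qed

lemma splits_counits_heq: "splits_counits t S \<Longrightarrow> t \<approx> t' \<Longrightarrow> splits_counits t' S"
  unfolding splits_counits_def by (meson heq_sym heq_trans)

lemma splits_counits_mono: "splits_counits t S \<Longrightarrow> S' \<subseteq> S \<Longrightarrow> splits_counits t S'"
  unfolding splits_counits_def by blast

lemma splits_counits_empty:
  assumes t: "htype G t = Some (A, B)"
  shows "splits_counits t {}"
proof (rule splits_counitsI)
  have B: "set B \<subseteq> g_ar G"
    using t htype_arrows by blast
  have "Cmp (Tns (Eps_list []) (Idt B)) t \<approx> Cmp (Idt B) t"
    using t B by (intro heq_CmpL) (auto intro: Tns_unit_left)
  also have "\<dots> \<approx> t"
    using t B by (intro Cmp_Idt_left) auto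
  finally show "t \<approx> Cmp (Tns (Eps_list []) (Idt B)) t"
    by (rule heq_sym)
qed simp

lemma splits_counits_Idt_single:
  assumes e: "e \<in> g_ar G"
  shows "splits_counits (Idt [e]) {e}"
proof (rule splits_counitsI)
  have "Cmp (Tns (Eps_list [e]) (Idt [e])) (Dlt e) \<approx> Cmp (Tns (Eps e) (Idt [e])) (Dlt e)"
    using e by (intro heq_CmpL heq_TnsL) (auto intro: Tns_unit_right)
  also have "\<dots> \<approx> Idt [e]"
    using e by (intro heq_axiomI[OF h_counitl[unfolded i1_def]]) auto
  finally show "Idt [e] \<approx> Cmp (Tns (Eps_list [e]) (Idt [e])) (Dlt e)"
    by (rule heq_sym)
qed simp

lemma splits_counits_Cmp:
  assumes f: "splits_counits f S" and g: "splits_counits g S'" and fg: "htype G (Cmp f g) \<noteq> None"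
  shows "splits_counits (Cmp f g) (S \<union> S')"
proof -
  from fg obtain A C where "htype G (Cmp f g) = Some (A, C)"
    by auto
  then obtain B where tyg: "htype G g = Some (A, B)" and tyf: "htype G f = Some (B, C)"
    unfolding htype_Cmp_eq_Some by blast
  obtain Ef f' where f': "htype G f' = Some (B, Ef @ C)" "set Ef \<subseteq> g_ar G"
    and f_eq: "f \<approx> Cmp (Tns (Eps_list Ef) (Idt C)) f'" and S: "S \<subseteq> set Ef"
    using splits_counitsE[OF f tyf] .
  obtain Eg g' where g': "htype G g' = Some (A, Eg @ B)" "set Eg \<subseteq> g_ar G"
    and g_eq: "g \<approx> Cmp (Tns (Eps_list Eg) (Idt B)) g'" and S': "S' \<subseteq> set Eg"
    using splits_counitsE[OF g tyg] .
  have arrows: "set A \<subseteq> g_ar G" "set B \<subseteq> g_ar G" "set C \<subseteq> g_ar G"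
    using htype_arrows tyf tyg by blast+
  note types = f' g' arrows
  let ?Kf = "Tns (Eps_list Ef) (Idt C)" and ?Kg = "Tns (Eps_list Eg) (Idt B)"
  have "Cmp f g \<approx> Cmp (Cmp ?Kf f') (Cmp ?Kg g')"
    using f_eq g_eq fg by (rule heq_CmpI)
  also have "\<dots> \<approx> Cmp ?Kf (Cmp (Cmp f' ?Kg) g')"
    using types by (intro heq_trans[OF Cmp_assoc] heq_CmpR heq_sym[OF Cmp_assoc]) auto
  also have "\<dots> \<approx> Cmp ?Kf (Cmp (Cmp (Tns (Eps_list Eg) (Idt (Ef @ C))) (Tns (Idt Eg) f')) g')"
    using types by (intro heq_CmpR heq_CmpL slide_copoint) auto
  also have "\<dots> \<approx> Cmp (Cmp ?Kf (Tns (Eps_list Eg) (Idt (Ef @ C)))) (Cmp (Tns (Idt Eg) f') g')"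
    using types by (intro heq_trans[OF heq_CmpR[OF Cmp_assoc]] heq_sym[OF Cmp_assoc]) auto
  also have "\<dots> \<approx> Cmp (Tns (Eps_list (Eg @ Ef)) (Idt C)) (Cmp (Tns (Idt Eg) f') g')"
    using types by (intro heq_CmpL Cmp_Eps_list) auto
  finally show ?thesis
    using S S' by (intro splits_counitsI) auto
qed

lemma splits_counits_Tns_Idt:
  assumes f: "splits_counits f S" "htype G f = Some (A, B)" and D: "set D \<subseteq> g_ar G"
  shows "splits_counits (Tns f (Idt D)) S"
proof -
  obtain E f' where f': "htype G f' = Some (A, E @ B)" "set E \<subseteq> g_ar G"
    and f_eq: "f \<approx> Cmp (Tns (Eps_list E) (Idt B)) f'" and S: "S \<subseteq> set E"
    using splits_counitsE[OF f] .
  have B: "set B \<subseteq> g_ar G"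
    using f(2) htype_arrows by blast
  have "Tns f (Idt D) \<approx> Tns (Cmp (Tns (Eps_list E) (Idt B)) f') (Idt D)"
    using f_eq D by (intro heq_TnsL) auto
  also have "\<dots> \<approx> Cmp (Tns (Tns (Eps_list E) (Idt B)) (Idt D)) (Tns f' (Idt D))"
    using f' B D by (intro heq_sym[OF Cmp_Tns_Idt]) auto
  also have "\<dots> \<approx> Cmp (Tns (Eps_list E) (Idt (B @ D))) (Tns f' (Idt D))"
    using f' B D by (intro heq_CmpL heq_sym[OF Tns_Idt_append]) auto
  finally show ?thesis
    using S by (rule splits_counitsI)
qed

lemma splits_counits_Idt_Tns:
  assumes g: "splits_counits g S" "htype G g = Some (C, D)" and A: "set A \<subseteq> g_ar G"
  shows "splits_counits (Tns (Idt A) g) S"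
proof -
  obtain E g' where g': "htype G g' = Some (C, E @ D)" "set E \<subseteq> g_ar G"
    and g_eq: "g \<approx> Cmp (Tns (Eps_list E) (Idt D)) g'" and S: "S \<subseteq> set E"
    using splits_counitsE[OF g] .
  have D: "set D \<subseteq> g_ar G"
    using g(2) htype_arrows by blast
  note types = g' A D
  let ?P = "Tns (Brd A E) (Idt D)"
  have "Tns (Idt A) (Tns (Eps_list E) (Idt D)) \<approx> Tns (Tns (Idt A) (Eps_list E)) (Idt D)"
    using types by (intro heq_sym[OF Tns_assoc]) auto
  also have "\<dots> \<approx> Tns (Cmp (Tns (Eps_list E) (Idt A)) (Brd A E)) (Idt D)"
    using types by (intro heq_TnsL heq_sym[OF Brd_copoint]) auto
  also have "\<dots> \<approx> Cmp (Tns (Tns (Eps_list E) (Idt A)) (Idt D)) ?P"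
    using types by (intro heq_sym[OF Cmp_Tns_Idt]) auto
  also have "\<dots> \<approx> Cmp (Tns (Eps_list E) (Idt (A @ D))) ?P"
    using types by (intro heq_CmpL heq_sym[OF Tns_Idt_append]) auto
  finally have braided: "Tns (Idt A) (Tns (Eps_list E) (Idt D)) \<approx> Cmp (Tns (Eps_list E) (Idt (A @ D))) ?P" .
  have "Tns (Idt A) g \<approx> Tns (Idt A) (Cmp (Tns (Eps_list E) (Idt D)) g')"
    using g_eq A by (intro heq_TnsR) auto
  also have "\<dots> \<approx> Cmp (Tns (Idt A) (Tns (Eps_list E) (Idt D))) (Tns (Idt A) g')"
    using types by (intro heq_sym[OF Cmp_Idt_Tns]) auto
  also have "\<dots> \<approx> Cmp (Cmp (Tns (Eps_list E) (Idt (A @ D))) ?P) (Tns (Idt A) g')"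
    using braided types by (intro heq_CmpL) auto
  also have "\<dots> \<approx> Cmp (Tns (Eps_list E) (Idt (A @ D))) (Cmp ?P (Tns (Idt A) g'))"
    using types by (intro Cmp_assoc) auto
  finally show ?thesis
    using S by (rule splits_counitsI)
qed

lemma splits_counits_Tns:
  assumes f: "splits_counits f S" "htype G f = Some (A, B)"
    and g: "splits_counits g S'" "htype G g = Some (C, D)"
  shows "splits_counits (Tns f g) (S \<union> S')"
proof -
  have "set A \<subseteq> g_ar G" "set D \<subseteq> g_ar G"
    using f(2) g(2) htype_arrows by blast+
  then have "splits_counits (Cmp (Tns f (Idt D)) (Tns (Idt A) g)) (S \<union> S')"
    using f g by (intro splits_counits_Cmp splits_counits_Tns_Idt splits_counits_Idt_Tns) auto
  then show ?thesis
    using Tns_split_snd_first[OF f(2) g(2)] by (blast intro: splits_counits_heq heq_sym)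
qed

lemma splits_counits_Idt:
  "set A \<subseteq> g_ar G \<Longrightarrow> splits_counits (Idt A) (set A)"
proof (induction A)
  case Nil
  then show ?case
    using splits_counits_empty[of "Idt []"] by simp
next
  case (Cons a A)
  then have "splits_counits (Tns (Idt [a]) (Idt A)) ({a} \<union> set A)"
    by (intro splits_counits_Tns splits_counits_Idt_single) auto
  moreover have "Tns (Idt [a]) (Idt A) \<approx> Idt (a # A)"
    using Cons.prems Tns_Idt[of "[a]" A] by simp
  ultimately show ?case
    by (auto intro: splits_counits_heq)
qed

lemma splits_counits_boundary:
  assumes t: "htype G t = Some (A, B)"
  shows "splits_counits t (set A \<union> set B)"
proof -
  have arrows: "set A \<subseteq> g_ar G" "set B \<subseteq> g_ar G"
    using t htype_arrows by blast+
  then have "splits_counits (Cmp (Idt B) (Cmp t (Idt A))) (set B \<union> ({} \<union> set A))"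
    using t by (intro splits_counits_Cmp splits_counits_Idt splits_counits_empty) auto
  moreover have "Cmp (Idt B) (Cmp t (Idt A)) \<approx> t"
    using t arrows by (intro heq_trans[OF Cmp_Idt_left Cmp_Idt_right]) auto
  ultimately have "splits_counits t (set B \<union> set A)"
    by (auto intro: splits_counits_heq)
  then show ?thesis
    by (simp add: Un_commute)
qed

lemma splits_counits_labels: "htype G t \<noteq> None \<Longrightarrow> splits_counits t (labels G t)"
proof (induction t)
  case (Cmp f g)
  then show ?case
    by (auto intro: splits_counits_Cmp split: option.splits if_splits)
next
  case (Tns f g)
  then show ?case
    by (auto intro: splits_counits_Tns split: option.splits)
qed (auto intro!: splits_counits_mono[OF splits_counits_boundary] split: if_splits)

section \<open>Absorbing counits into integrals\<close>

lemma Eps_Ant: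
  assumes g: "g \<in> g_ar G"
  shows "Cmp (Eps (g_inv G g)) (Ant g) \<approx> Eps g"
proof -
  let ?j = "g_tgt G g" and ?gi = "g_inv G g"
  let ?s = "Cmp (Eps ?gi) (Ant g)" and ?antipode = "Cmp (Tns (Ant g) (Idt [g])) (Dlt g)"
  have Eps_Mul: "Cmp (Eps (g_ide G ?j)) (Mul ?gi g) \<approx> Tns (Eps ?gi) (Eps g)"
    using heq_axiomI[OF h_epsmul[of G ?gi g]] g by simp
  have "Eps g \<approx> Cmp (Idt []) (Eps g)"
    using g by (intro heq_sym[OF Cmp_Idt_left]) auto
  also have "\<dots> \<approx> Cmp (Cmp (Eps (g_ide G ?j)) (Eta ?j)) (Eps g)"
    using g by (intro heq_CmpL heq_sym[OF heq_axiomI[OF h_epseta]]) auto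
  also have "\<dots> \<approx> Cmp (Eps (g_ide G ?j)) (Cmp (Eta ?j) (Eps g))"
    using g by (intro Cmp_assoc) auto
  also have "\<dots> \<approx> Cmp (Eps (g_ide G ?j)) (Cmp (Mul ?gi g) ?antipode)"
    using g by (intro heq_CmpR heq_sym[OF heq_axiomI[OF h_antl[unfolded i1_def]]]) auto
  also have "\<dots> \<approx> Cmp (Cmp (Eps (g_ide G ?j)) (Mul ?gi g)) ?antipode"
    using g by (intro heq_sym[OF Cmp_assoc]) auto
  also have "\<dots> \<approx> Cmp (Tns (Eps ?gi) (Eps g)) ?antipode"
    using g Eps_Mul by (intro heq_CmpL) auto
  also have "\<dots> \<approx> Cmp (Cmp (Tns (Eps ?gi) (Eps g)) (Tns (Ant g) (Idt [g]))) (Dlt g)"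
    using g by (intro heq_sym[OF Cmp_assoc]) auto
  also have "\<dots> \<approx> Cmp (Tns ?s (Cmp (Eps g) (Idt [g]))) (Dlt g)"
    using g by (intro heq_CmpL Cmp_Tns) auto
  also have "\<dots> \<approx> Cmp (Tns ?s (Eps g)) (Dlt g)"
    using g by (intro heq_CmpL heq_TnsR Cmp_Idt_right) auto
  also have "\<dots> \<approx> Cmp (Cmp (Tns ?s (Idt [])) (Tns (Idt [g]) (Eps g))) (Dlt g)"
    using g by (intro heq_CmpL Tns_split_snd_first) auto
  also have "\<dots> \<approx> Cmp (Cmp ?s (Tns (Idt [g]) (Eps g))) (Dlt g)"
    using g by (intro heq_CmpL Tns_unit_right) auto
  also have "\<dots> \<approx> Cmp ?s (Cmp (Tns (Idt [g]) (Eps g)) (Dlt g))"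
    using g by (intro Cmp_assoc) auto
  also have "\<dots> \<approx> Cmp ?s (Idt [g])"
    using g by (intro heq_CmpR heq_axiomI[OF h_counitr[unfolded i1_def]]) auto
  also have "\<dots> \<approx> ?s"
    using g by (intro Cmp_Idt_right) auto
  finally show ?thesis
    by (rule heq_sym)
qed

lemma copy_to_front:
  assumes "e \<in> set E" and "set E \<subseteq> g_ar G"
  obtains D where "htype G D = Some (E, e # E)" and "Cmp (Tns (Eps e) (Idt E)) D \<approx> Idt E"
proof -
  obtain E1 E2 where E: "E = E1 @ e # E2"
    using split_list[OF assms(1)] by blast
  have arrows: "set E1 \<subseteq> g_ar G" "e \<in> g_ar G" "set E2 \<subseteq> g_ar G"
    using assms(2) E by auto
  let ?D = "Cmp (Tns (Brd E1 [e]) (Idt (e # E2))) (Tns (Idt E1) (Tns (Dlt e) (Idt E2)))"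
  have counit: "Cmp (Tns (Eps e) (Idt (e # E2))) (Tns (Dlt e) (Idt E2)) \<approx> Idt (e # E2)"
  proof -
    have "Cmp (Tns (Eps e) (Idt (e # E2))) (Tns (Dlt e) (Idt E2)) \<approx>
        Cmp (Tns (Tns (Eps e) (Idt [e])) (Idt E2)) (Tns (Dlt e) (Idt E2))"
      using arrows Tns_Idt_append[of "Eps e" "[e]" E2] by (intro heq_CmpL) auto
    also have "\<dots> \<approx> Tns (Cmp (Tns (Eps e) (Idt [e])) (Dlt e)) (Idt E2)"
      using arrows by (intro Cmp_Tns_Idt) auto
    also have "\<dots> \<approx> Tns (Idt [e]) (Idt E2)"
      using arrows by (intro heq_TnsL heq_axiomI[OF h_counitl[unfolded i1_def]]) auto
    also have "\<dots> \<approx> Idt (e # E2)"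
      using arrows Tns_Idt[of "[e]" E2] by simp
    finally show ?thesis .
  qed
  have "Cmp (Tns (Eps e) (Idt (E1 @ e # E2))) ?D \<approx> Cmp (Tns (Tns (Eps e) (Idt E1)) (Idt (e # E2))) ?D"
    using arrows by (intro heq_CmpL Tns_Idt_append) auto
  also have "\<dots> \<approx> Cmp (Cmp (Tns (Tns (Eps e) (Idt E1)) (Idt (e # E2))) (Tns (Brd E1 [e]) (Idt (e # E2))))
      (Tns (Idt E1) (Tns (Dlt e) (Idt E2)))"
    using arrows by (intro heq_sym[OF Cmp_assoc]) auto
  also have "\<dots> \<approx> Cmp (Tns (Tns (Idt E1) (Eps e)) (Idt (e # E2))) (Tns (Idt E1) (Tns (Dlt e) (Idt E2)))"
    using arrows by (intro heq_CmpL heq_trans[OF Cmp_Tns_Idt] heq_TnsL Brd_copoint) auto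
  also have "\<dots> \<approx> Cmp (Tns (Idt E1) (Tns (Eps e) (Idt (e # E2)))) (Tns (Idt E1) (Tns (Dlt e) (Idt E2)))"
    using arrows by (intro heq_CmpL Tns_assoc) auto
  also have "\<dots> \<approx> Tns (Idt E1) (Cmp (Tns (Eps e) (Idt (e # E2))) (Tns (Dlt e) (Idt E2)))"
    using arrows by (intro Cmp_Idt_Tns) auto
  also have "\<dots> \<approx> Tns (Idt E1) (Idt (e # E2))"
    using arrows counit by (intro heq_TnsR) auto
  also have "\<dots> \<approx> Idt (E1 @ e # E2)"
    using arrows by (intro Tns_Idt) auto
  finally show ?thesis
    using that[of ?D] arrows E by simp
qed

definition factors_through_Lco :: "'m list \<Rightarrow> 'm \<Rightarrow> bool" where
  "factors_through_Lco E k \<longleftrightarrow> k \<in> g_ar G \<and>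
     (\<exists>\<theta>. htype G \<theta> = Some (k # E, []) \<and> Cmp \<theta> (Tns (Lco k) (Idt E)) \<approx> Eps_list E)"

lemma factors_through_Lco_ide:
  assumes E: "set E \<subseteq> g_ar G" and i: "i \<in> g_ob G"
  shows "factors_through_Lco E (g_ide G i)"
proof -
  let ?\<theta> = "Tns (Lint i) (Eps_list E)"
  have "Cmp ?\<theta> (Tns (Lco (g_ide G i)) (Idt E)) \<approx> Tns (Cmp (Lint i) (Lco (g_ide G i))) (Cmp (Eps_list E) (Idt E))"
    using E i by (intro Cmp_Tns) auto
  also have "\<dots> \<approx> Tns (Idt []) (Eps_list E)"
    using E i by (intro heq_Tns heq_axiomI[OF i_norm1] Cmp_Idt_right) auto
  also have "\<dots> \<approx> Eps_list E"
    using E by (intro Tns_unit_left) auto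
  finally show ?thesis
    unfolding factors_through_Lco_def using E i by (auto intro!: exI[of _ ?\<theta>])
qed

lemma Lco_absorbs_counital:
  assumes \<sigma>: "htype G \<sigma> = Some ([e], [h])" "Cmp (Eps h) \<sigma> \<approx> Eps e"
    and K: "K \<in> g_ar G" "g_tgt G K = g_src G h" and E: "set E \<subseteq> g_ar G"
  shows "Cmp (Tns (Cmp (Mul K h) (Tns (Idt [K]) \<sigma>)) (Idt E)) (Tns (Lco K) (Idt (e # E))) \<approx>
    Cmp (Tns (Lco (g_cmp G K h)) (Idt E)) (Tns (Eps e) (Idt E))"
proof -
  let ?M = "Cmp (Mul K h) (Tns (Idt [K]) \<sigma>)" and ?k = "g_cmp G K h"
  have types: "h \<in> g_ar G" "e \<in> g_ar G"
    using htype_arrows[OF \<sigma>(1)] by auto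
  note types = types K E \<sigma>(1)
  have integral: "Cmp (Mul K h) (Tns (Lco K) (Idt [h])) \<approx> Cmp (Lco ?k) (Eps h)"
    using heq_axiomI[OF i_right[of G K h, unfolded i1_def]] types by simp
  have "Cmp ?M (Tns (Lco K) (Idt [e])) \<approx> Cmp (Mul K h) (Cmp (Tns (Idt [K]) \<sigma>) (Tns (Lco K) (Idt [e])))"
    using types by (intro Cmp_assoc) auto
  also have "\<dots> \<approx> Cmp (Mul K h) (Cmp (Tns (Lco K) (Idt [h])) \<sigma>)"
    using types by (intro heq_CmpR slide_point) auto
  also have "\<dots> \<approx> Cmp (Cmp (Lco ?k) (Eps h)) \<sigma>"
    using types integral by (intro heq_trans[OF heq_sym[OF Cmp_assoc]] heq_CmpL) auto
  also have "\<dots> \<approx> Cmp (Lco ?k) (Eps e)"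
    using types \<sigma>(2) by (intro heq_trans[OF Cmp_assoc] heq_CmpR) auto
  finally have M: "Cmp ?M (Tns (Lco K) (Idt [e])) \<approx> Cmp (Lco ?k) (Eps e)" .
  have "Cmp (Tns ?M (Idt E)) (Tns (Lco K) (Idt (e # E))) \<approx>
      Cmp (Tns ?M (Idt E)) (Tns (Tns (Lco K) (Idt [e])) (Idt E))"
    using types Tns_Idt_append[of "Lco K" "[e]" E] by (intro heq_CmpR) auto
  also have "\<dots> \<approx> Tns (Cmp ?M (Tns (Lco K) (Idt [e]))) (Idt E)"
    using types by (intro Cmp_Tns_Idt) auto
  also have "\<dots> \<approx> Tns (Cmp (Lco ?k) (Eps e)) (Idt E)"
    using types M by (intro heq_TnsL) auto
  also have "\<dots> \<approx> Cmp (Tns (Lco ?k) (Idt E)) (Tns (Eps e) (Idt E))"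
    using types by (intro heq_sym[OF Cmp_Tns_Idt]) auto
  finally show ?thesis .
qed

lemma factors_through_Lco_step:
  assumes E: "set E \<subseteq> g_ar G" and k: "factors_through_Lco E k" and e: "e \<in> set E"
    and \<sigma>: "htype G \<sigma> = Some ([e], [h])" "Cmp (Eps h) \<sigma> \<approx> Eps e"
    and kh: "g_tgt G k = g_tgt G h"
  shows "factors_through_Lco E (g_cmp G k (g_inv G h))"
proof -
  obtain \<theta> where "k \<in> g_ar G" and \<theta>: "htype G \<theta> = Some (k # E, [])"
    and \<theta>_eq: "Cmp \<theta> (Tns (Lco k) (Idt E)) \<approx> Eps_list E"
    using k unfolding factors_through_Lco_def by blast
  obtain D where D: "htype G D = Some (E, e # E)" and D_eq: "Cmp (Tns (Eps e) (Idt E)) D \<approx> Idt E"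
    using copy_to_front[OF e E] .
  have "h \<in> g_ar G" "e \<in> g_ar G"
    using htype_arrows[OF \<sigma>(1)] by auto
  define K where "K = g_cmp G k (g_inv G h)"
  have K: "K \<in> g_ar G" "g_tgt G K = g_src G h" "g_cmp G K h = k"
    unfolding K_def using \<open>k \<in> g_ar G\<close> \<open>h \<in> g_ar G\<close> kh[symmetric] by (auto simp: cmp_assoc)
  note types = E \<open>k \<in> g_ar G\<close> \<theta> D \<open>h \<in> g_ar G\<close> \<open>e \<in> g_ar G\<close> K \<sigma>(1)
  let ?M = "Cmp (Mul K h) (Tns (Idt [K]) \<sigma>)"
  let ?\<theta>' = "Cmp \<theta> (Cmp (Tns ?M (Idt E)) (Tns (Idt [K]) D))"
  have "Cmp ?\<theta>' (Tns (Lco K) (Idt E)) \<approx>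
      Cmp \<theta> (Cmp (Tns ?M (Idt E)) (Cmp (Tns (Idt [K]) D) (Tns (Lco K) (Idt E))))"
    using types by (intro heq_trans[OF Cmp_assoc] heq_CmpR Cmp_assoc) auto
  also have "\<dots> \<approx> Cmp \<theta> (Cmp (Tns ?M (Idt E)) (Cmp (Tns (Lco K) (Idt (e # E))) D))"
    using types by (intro heq_CmpR slide_point) auto
  also have "\<dots> \<approx> Cmp \<theta> (Cmp (Cmp (Tns (Lco k) (Idt E)) (Tns (Eps e) (Idt E))) D)"
    using types Lco_absorbs_counital[OF \<sigma> K(1,2) E]
    by (intro heq_CmpR heq_trans[OF heq_sym[OF Cmp_assoc]] heq_CmpL) auto
  also have "\<dots> \<approx> Cmp \<theta> (Cmp (Tns (Lco k) (Idt E)) (Idt E))"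
    using types D_eq by (intro heq_CmpR heq_trans[OF Cmp_assoc]) auto
  also have "\<dots> \<approx> Eps_list E"
    using types \<theta>_eq by (intro heq_trans[OF heq_CmpR[OF Cmp_Idt_right]]) auto
  finally show ?thesis
    unfolding factors_through_Lco_def K_def[symmetric] using types by (auto intro!: exI[of _ ?\<theta>'])
qed

lemma gen_closure_arrows: "a \<in> gen_closure G X \<Longrightarrow> a \<in> g_ar G"
  by (induction rule: gen_closure.induct) auto

lemma gen_closure_mono: "a \<in> gen_closure G X \<Longrightarrow> X \<inter> g_ar G \<subseteq> Y \<Longrightarrow> a \<in> gen_closure G Y"
  by (induction rule: gen_closure.induct) (auto intro: gen_closure.intros)

lemma factors_through_Lco_closure:
  assumes "a \<in> gen_closure G (set E)" and "set E \<subseteq> g_ar G"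
    and "factors_through_Lco E k" and "g_tgt G k = g_src G a"
  shows "factors_through_Lco E (g_cmp G k a)"
  using assms
proof (induction arbitrary: k rule: gen_closure.induct)
  case (gc_ide i)
  then show ?case
    unfolding factors_through_Lco_def by (metis cmp_ide_right src_ide)
next
  case (gc_gen x)
  have "factors_through_Lco E (g_cmp G k (g_inv G (g_inv G x)))"
    using gc_gen Eps_Ant by (intro factors_through_Lco_step[where \<sigma> = "Ant x"]) auto
  then show ?case
    using gc_gen by simp
next
  case (gc_inv x)
  show ?case
    using gc_inv by (intro factors_through_Lco_step[where \<sigma> = "Idt [x]"]) (auto intro: Cmp_Idt_right)
next
  case (gc_cmp a b)
  have a: "a \<in> g_ar G" and b: "b \<in> g_ar G"
    using gc_cmp.hyps gen_closure_arrows by blast+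
  have k: "k \<in> g_ar G"
    using gc_cmp.prems(2) unfolding factors_through_Lco_def by blast
  have "factors_through_Lco E (g_cmp G (g_cmp G k a) b)"
    using gc_cmp a b k by (intro gc_cmp.IH(2) gc_cmp.IH(1)) auto
  then show ?case
    using gc_cmp a b k by (simp add: cmp_assoc)
qed

lemma closed_factors_through_Lco:
  assumes F: "htype G F = Some ([], [])" and g: "g \<in> gen_closure G (labels G F)"
  obtains F' where "htype G F' = Some ([g], [])" and "F \<approx> Cmp F' (Lco g)"
proof -
  have "splits_counits F (labels G F)"
    using F by (intro splits_counits_labels) auto
  then obtain E Q where Q: "htype G Q = Some ([], E @ [])" "set E \<subseteq> g_ar G"
    and F_eq: "F \<approx> Cmp (Tns (Eps_list E) (Idt [])) Q" and labels: "labels G F \<subseteq> set E"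
    using F by (rule splits_counitsE)
  have "g \<in> g_ar G"
    using g by (rule gen_closure_arrows)
  have "g \<in> gen_closure G (set E)"
    using g by (rule gen_closure_mono) (use labels in blast)
  then have "factors_through_Lco E (g_cmp G (g_ide G (g_src G g)) g)"
    using Q \<open>g \<in> g_ar G\<close> by (intro factors_through_Lco_closure factors_through_Lco_ide) auto
  then obtain \<theta> where \<theta>: "htype G \<theta> = Some (g # E, [])" "Cmp \<theta> (Tns (Lco g) (Idt E)) \<approx> Eps_list E"
    using \<open>g \<in> g_ar G\<close> unfolding factors_through_Lco_def by auto
  note types = Q \<theta>(1) \<open>g \<in> g_ar G\<close>
  have "F \<approx> Cmp (Tns (Eps_list E) (Idt [])) Q"
    by (rule F_eq)
  also have "\<dots> \<approx> Cmp (Eps_list E) Q"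
    using types by (intro heq_CmpL Tns_unit_right) auto
  also have "\<dots> \<approx> Cmp (Cmp \<theta> (Tns (Lco g) (Idt E))) Q"
    using types heq_sym[OF \<theta>(2)] by (intro heq_CmpL) auto
  also have "\<dots> \<approx> Cmp \<theta> (Cmp (Tns (Lco g) (Idt E)) Q)"
    using types by (intro Cmp_assoc) auto
  also have "\<dots> \<approx> Cmp \<theta> (Cmp (Tns (Idt [g]) Q) (Tns (Lco g) (Idt [])))"
    using types by (intro heq_CmpR heq_sym[OF slide_point]) auto
  also have "\<dots> \<approx> Cmp \<theta> (Cmp (Tns (Idt [g]) Q) (Lco g))"
    using types by (intro heq_CmpR Tns_unit_right) auto
  also have "\<dots> \<approx> Cmp (Cmp \<theta> (Tns (Idt [g]) Q)) (Lco g)"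
    using types by (intro heq_sym[OF Cmp_assoc]) auto
  finally show ?thesis
    using that[of "Cmp \<theta> (Tns (Idt [g]) Q)"] types by simp
qed

end

theorem lemma8p5:
  fixes G :: "('o, 'm) grpd" and F :: "('o, 'm) hterm"
  assumes "groupoid G" and "connected G"
    and "wt G F [] []"
    and "complete G F"
  shows "\<forall>g\<in>g_ar G. \<exists>F'. wt G F' [g] [] \<and> heq G F (Cmp F' (Lco g))"
proof
  fix g
  assume "g \<in> g_ar G"
  interpret hterm_groupoid G
    by unfold_locales (rule assms(1))
  have "htype G F = Some ([], [])"
    using assms(3) by (simp add: wt_iff_htype)
  moreover have "g \<in> gen_closure G (labels G F)"
    using assms(4) \<open>g \<in> g_ar G\<close> unfolding complete_def by blast
  ultimately obtain F' where "htype G F' = Some ([g], [])" "F \<approx> Cmp F' (Lco g)"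
    by (rule closed_factors_through_Lco)
  then show "\<exists>F'. wt G F' [g] [] \<and> heq G F (Cmp F' (Lco g))"
    by (auto simp: wt_iff_htype)
qed

end
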